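(* Let $r,K,\alpha,\phi,c,m_1,m_2,\lambda,a,d,\delta,\gamma,\sigma,\eta$ be positive constants with $\phi<1$ and $m_1>m_2$, and consider the system \[ \begin{cases} \dot X = rX\left(1-\frac{X}{K}\right)-\frac{\alpha XS}{c+X}-\frac{\phi\alpha XI}{c+X},\\[1mm] \dot S = \frac{m_1\alpha XS}{c+X}-\frac{\lambda AS}{a+A}-dS,\\[1mm] \dot I = \frac{m_2\phi\alpha XI}{c+X}+\frac{\lambda AS}{a+A}-(d+\delta)I,\\[1mm] \dot A = \gamma+\sigma(S+I)-\eta A. \end{cases} \] Then the axial equilibrium $E_0=(0,0,0,\gamma/\eta)$ is always unstable. *)

theory Defs
  imports "HOL-Analysis.Analysis"
begin

definition eco_field ::
  "real \<Rightarrow> real \<Rightarrow> real \<Rightarrow> real \<Rightarrow> real \<Rightarrow> real \<Rightarrow> real \<Rightarrow> real \<Rightarrow> real \<Rightarrow> real \<Rightarrow> real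
   \<Rightarrow> real \<Rightarrow> real \<Rightarrow> real \<Rightarrow> real^4 \<Rightarrow> real^4" where
  "eco_field r K \<alpha> \<phi> c m1 m2 lam a d \<delta> \<gamma> \<sigma> \<eta> v =
     (let X = v$1; S = v$2; I = v$3; A = v$4 in
      vector [ r*X*(1 - X/K) - \<alpha>*X*S/(c+X) - \<phi>*\<alpha>*X*I/(c+X),
               m1*\<alpha>*X*S/(c+X) - lam*A*S/(a+A) - d*S,
               m2*\<phi>*\<alpha>*X*I/(c+X) + lam*A*S/(a+A) - (d+\<delta>)*I,
               \<gamma> + \<sigma>*(S+I) - \<eta>*A ])"

definition is_solution :: "(real^4 \<Rightarrow> real^4) \<Rightarrow> (real \<Rightarrow> real^4) \<Rightarrow> bool" where
  "is_solution F x \<longleftrightarrow> (\<forall>t\<ge>0. (x has_vector_derivative F (x t)) (at t within {0..}))"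

definition equilibrium :: "(real^4 \<Rightarrow> real^4) \<Rightarrow> real^4 \<Rightarrow> bool" where
  "equilibrium F e \<longleftrightarrow> F e = 0"

definition lyapunov_stable :: "(real^4 \<Rightarrow> real^4) \<Rightarrow> real^4 \<Rightarrow> bool" where
  "lyapunov_stable F e \<longleftrightarrow>
     (\<forall>\<epsilon>>0. \<exists>\<delta>>0. \<forall>x. is_solution F x \<and> norm (x 0 - e) < \<delta> \<longrightarrow>
         (\<forall>t\<ge>0. norm (x t - e) < \<epsilon>))"

definition unstable :: "(real^4 \<Rightarrow> real^4) \<Rightarrow> real^4 \<Rightarrow> bool" where
  "unstable F e \<longleftrightarrow> equilibrium F e \<and> \<not> lyapunov_stable F e"

end

theory Submission
  imports Defs
begin

text \<open>On the invariant line \<open>S = I = 0\<close>, \<open>A = \<gamma>/\<eta>\<close> through \<open>E\<^sub>0\<close> the prey obeys the logistic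
  equation \<open>X' = r X (1 - X/K)\<close>. Starting arbitrarily close to \<open>E\<^sub>0\<close> with \<open>0 < X(0) < K\<close>, the
  logistic solution reaches \<open>K/2\<close> in finite time, so no neighbourhood of \<open>E\<^sub>0\<close> traps the
  nearby orbits.\<close>

definition logistic :: "real \<Rightarrow> real \<Rightarrow> real \<Rightarrow> real \<Rightarrow> real" where
  "logistic r K x0 t = K * x0 / (x0 + (K - x0) * exp (- r * t))"

lemma logistic_has_real_derivative:
  assumes "0 < x0" "x0 \<le> K"
  shows "(logistic r K x0 has_real_derivative
           r * logistic r K x0 t * (1 - logistic r K x0 t / K)) (at t within S)"
proof -
  define E where "E = exp (- r * t)"
  define D where "D = x0 + (K - x0) * E"
  have "D > 0"
    using assms by (simp add: D_def E_def add_pos_nonneg)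
  have "(logistic r K x0 has_real_derivative - (K * x0) * ((K - x0) * (E * - r)) / D\<^sup>2) (at t within S)"
    using \<open>D > 0\<close> unfolding logistic_def D_def E_def
    by (auto intro!: derivative_eq_intros simp: power2_eq_square)
  moreover have "logistic r K x0 t = K * x0 / D"
    by (simp add: logistic_def D_def E_def)
  moreover have "K * x0 / D / K = x0 / D"
    using assms by simp
  moreover have "1 - x0 / D = (K - x0) * E / D"
    using \<open>D > 0\<close> by (simp add: D_def field_simps)
  moreover have "- (K * x0) * ((K - x0) * (E * - r)) / D\<^sup>2 = r * (K * x0 / D) * ((K - x0) * E / D)"
    by (simp add: power2_eq_square)
  ultimately show ?thesis
    by simp
qed

lemma logistic_0 [simp]: "K \<noteq> 0 \<Longrightarrow> logistic r K x0 0 = x0"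
  by (simp add: logistic_def)

lemma logistic_reaches_half:
  assumes "r \<noteq> 0" "0 < x0" "x0 < K"
  shows "logistic r K x0 (ln ((K - x0) / x0) / r) = K / 2"
proof -
  have "exp (- r * (ln ((K - x0) / x0) / r)) = x0 / (K - x0)"
    using assms by (simp add: exp_minus exp_ln)
  then show ?thesis
    using assms by (simp add: logistic_def field_simps)
qed

lemma is_solution_on_line:
  assumes "\<And>t. t \<ge> 0 \<Longrightarrow> (y has_real_derivative g (y t)) (at t within {0..})"
    and "\<And>s. F (p + s *\<^sub>R v) = g s *\<^sub>R v"
  shows "is_solution F (\<lambda>t. p + y t *\<^sub>R v)"
  unfolding is_solution_def
proof (intro allI impI)
  fix t :: real
  assume "t \<ge> 0"
  then have "((\<lambda>t. y t *\<^sub>R v) has_vector_derivative g (y t) *\<^sub>R v) (at t within {0..})"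
    using has_vector_derivative_scaleR[OF assms(1) has_vector_derivative_const] by simp
  then show "((\<lambda>t. p + y t *\<^sub>R v) has_vector_derivative F (p + y t *\<^sub>R v)) (at t within {0..})"
    unfolding assms(2) by (rule has_vector_derivative_add[OF has_vector_derivative_const, simplified])
qed

lemma vector_4 [simp]:
  "(vector [x, y, z, w] :: 'a::zero^4) $ 1 = x"
  "(vector [x, y, z, w] :: 'a::zero^4) $ 2 = y"
  "(vector [x, y, z, w] :: 'a::zero^4) $ 3 = z"
  "(vector [x, y, z, w] :: 'a::zero^4) $ 4 = w"
  unfolding vector_def by simp_all

lemma norm_vector_4_axis_1 [simp]: "norm (vector [1, 0, 0, 0] :: real^4) = 1"
  by (simp add: norm_vec_def L2_set_def sum_4)

lemma eco_field_on_prey_axis: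
  assumes "\<eta> \<noteq> 0"
  shows "eco_field r K \<alpha> \<phi> c m1 m2 lam a d \<delta> \<gamma> \<sigma> \<eta> (vector [0, 0, 0, \<gamma>/\<eta>] + s *\<^sub>R vector [1, 0, 0, 0])
           = (r * s * (1 - s / K)) *\<^sub>R vector [1, 0, 0, 0]"
  using assms by (simp add: eco_field_def Let_def vec_eq_iff forall_4)

lemma eco_field_logistic_solution:
  assumes "\<eta> \<noteq> 0" "0 < x0" "x0 \<le> K"
  shows "is_solution (eco_field r K \<alpha> \<phi> c m1 m2 lam a d \<delta> \<gamma> \<sigma> \<eta>)
           (\<lambda>t. vector [0, 0, 0, \<gamma>/\<eta>] + logistic r K x0 t *\<^sub>R vector [1, 0, 0, 0])"
  using assms
  by (intro is_solution_on_line[where g = "\<lambda>s. r * s * (1 - s / K)"]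
      logistic_has_real_derivative eco_field_on_prey_axis)

theorem theorem2:
  fixes r K \<alpha> \<phi> c m1 m2 lam a d \<delta> \<gamma> \<sigma> \<eta> :: real
  assumes "r > 0" "K > 0" "\<alpha> > 0" "\<phi> > 0" "c > 0" "m1 > 0" "m2 > 0" "lam > 0"
    "a > 0" "d > 0" "\<delta> > 0" "\<gamma> > 0" "\<sigma> > 0" "\<eta> > 0"
    and "\<phi> < 1" and "m1 > m2"
  shows "unstable (eco_field r K \<alpha> \<phi> c m1 m2 lam a d \<delta> \<gamma> \<sigma> \<eta>) (vector [0, 0, 0, \<gamma>/\<eta>])"
proof -
  let ?F = "eco_field r K \<alpha> \<phi> c m1 m2 lam a d \<delta> \<gamma> \<sigma> \<eta>"
  let ?e = "vector [0, 0, 0, \<gamma>/\<eta>] :: real^4"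
  let ?u = "vector [1, 0, 0, 0] :: real^4"
  have "equilibrium ?F ?e"
    using eco_field_on_prey_axis[where s = 0] \<open>\<eta> > 0\<close> by (simp add: equilibrium_def)
  moreover have "\<not> lyapunov_stable ?F ?e"
  proof
    assume "lyapunov_stable ?F ?e"
    moreover have "K / 2 > 0"
      using \<open>K > 0\<close> by simp
    ultimately obtain \<rho> where "\<rho> > 0"
      and trapped: "\<And>x t. is_solution ?F x \<Longrightarrow> norm (x 0 - ?e) < \<rho> \<Longrightarrow> t \<ge> 0 \<Longrightarrow> norm (x t - ?e) < K / 2"
      unfolding lyapunov_stable_def by blast
    define x0 where "x0 = min (\<rho> / 2) (K / 2)"
    have x0: "0 < x0" "x0 \<le> K / 2" "x0 < \<rho>"
      using \<open>\<rho> > 0\<close> \<open>K > 0\<close> by (auto simp: x0_def)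
    define T where "T = ln ((K - x0) / x0) / r"
    have "(K - x0) / x0 \<ge> 1"
      using x0 by (simp add: field_simps)
    then have "T \<ge> 0"
      using \<open>r > 0\<close> by (simp add: T_def)
    have "is_solution ?F (\<lambda>t. ?e + logistic r K x0 t *\<^sub>R ?u)"
      using x0 \<open>\<eta> > 0\<close> by (intro eco_field_logistic_solution) auto
    then have "norm (logistic r K x0 T *\<^sub>R ?u) < K / 2"
      using trapped[OF _ _ \<open>T \<ge> 0\<close>] x0 \<open>K > 0\<close> by fastforce
    then show False
      using logistic_reaches_half[of r x0 K] x0 \<open>r > 0\<close> \<open>K > 0\<close> by (simp add: T_def)
  qed
  ultimately show ?thesis
    by (simp add: unstable_def)
qed

end
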